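(* The scalar curvature $\mathrm{Sc}(C\Gamma)$ of the generalized Cartan canonical connection $C\Gamma(N)$ of the space $\mathcal{ED}MH_m^n$, computed with respect to the adapted metric $\mathbb{G}=h^*_{ab}dt^a\otimes dt^b+\varphi_{ij}dx^i\otimes dx^j+h^*_{ab}\varphi^{ij}\delta p_i^a\otimes\delta p_j^b$, has the expression $$\mathrm{Sc}(C\Gamma)=(4mc)\cdot\chi+\mathfrak{R},$$ where $\chi=h^{ab}\chi_{ab}$ and $\mathfrak{R}=\varphi^{ij}\mathfrak{R}_{ij}$ are the classical scalar curvatures of the metrics $h_{ab}(t)$ and $\varphi_{ij}(x)$.
   Context: Let $(\mathcal{T}^m,h_{ab}(t))$ be a Riemannian manifold with coordinates $(t^a)$ and $M^n$ a manifold with coordinates $(x^i)$ carrying a semi-Riemannian metric $\varphi_{ij}(x)$; let $m\neq0$ (mass), $e$ (charge), $c$ (speed of light), $A^{(a)}_{(i)}(t,x)$ a d-tensor and $\mathcal{P}(t,x)$ a smooth function. On the dual 1-jet space $E^*=J^{1*}(\mathcal{T},M)$ with coordinates $(t^a,x^i,p^a_i)$ consider the Hamiltonian $H=\frac{1}{4mc}h_{ab}\varphi^{ij}p^a_ip^b_j-\frac{e}{m^2c}h_{ab}\varphi^{ij}A^{(b)}_{(j)}p^a_i+\frac{e^2}{m^3c}h_{ab}\varphi^{ij}A^{(a)}_{(i)}A^{(b)}_{(j)}-\mathcal{P}$; the pair $(E^*,H)$ is the space $\mathcal{ED}MH_m^n$. Its fundamental vertical metrical d-tensor is $\frac12\partial^2H/\partial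 p^a_i\partial p^b_j=h^*_{ab}\varphi^{ij}$ with $h^*_{ab}=(4mc)^{-1}h_{ab}$. Let $\chi^a_{bc}$, $\gamma^k_{ij}$ be the Christoffel symbols of $h_{ab}$, $\varphi_{ij}$. The canonical nonlinear connection is $N^{(a)}_{1\,(i)b}=\chi^a_{bf}p^f_i$, $N^{(a)}_{2\,(i)j}=\gamma^r_{ij}[\frac{2e}{m}A^{(a)}_{(r)}-p^a_r]-\frac{e}{m}[\partial A^{(a)}_{(i)}/\partial x^j+\partial A^{(a)}_{(j)}/\partial x^i]$, with adapted cobasis $\{dt^a,dx^i,\delta p^a_i=dp^a_i+N^{(a)}_{1\,(i)f}dt^f+N^{(a)}_{2\,(i)r}dx^r\}$. The generalized Cartan canonical connection is $C\Gamma(N)=(\chi^a_{bc},0,\gamma^i_{jk},0)$, whose Ricci tensor has exactly two effective local Ricci d-tensors $\chi_{ab}=\chi^f_{abf}$ and $\mathfrak{R}_{ij}=\mathfrak{R}^r_{ijr}$, the classical Ricci tensors of $h_{ab}$ and $\varphi_{ij}$ (with $\chi^d_{abc}$, $\mathfrak{R}^l_{ijk}$ their curvature tensors). *)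

theory Defs
  imports "HOL-Analysis.Analysis"
begin

text \<open>Local coordinate (index) calculus. Coordinates on T are indexed by a finite type 'm,
  on M by a finite type 'n; a metric is a matrix-valued function of the coordinates.\<close>

definition pd :: "(real^'k \<Rightarrow> real) \<Rightarrow> 'k \<Rightarrow> real^'k \<Rightarrow> real" where
  "pd f k y = deriv (\<lambda>s. f (y + s *\<^sub>R axis k 1)) 0"

definition christoffel :: "(real^'k \<Rightarrow> real^'k^'k) \<Rightarrow> real^'k \<Rightarrow> 'k \<Rightarrow> 'k \<Rightarrow> 'k \<Rightarrow> real" where
  "christoffel g y k i j =
     (1/2) * (\<Sum>l\<in>UNIV. matrix_inv (g y) $ k $ l *
        (pd (\<lambda>z. g z $ l $ i) j y + pd (\<lambda>z. g z $ l $ j) i y - pd (\<lambda>z. g z $ i $ j) l y))"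

definition curvature :: "(real^'k \<Rightarrow> real^'k^'k) \<Rightarrow> real^'k \<Rightarrow> 'k \<Rightarrow> 'k \<Rightarrow> 'k \<Rightarrow> 'k \<Rightarrow> real" where
  "curvature g y l i j k =
     pd (\<lambda>z. christoffel g z l i j) k y - pd (\<lambda>z. christoffel g z l i k) j y
     + (\<Sum>r\<in>UNIV. christoffel g y r i j * christoffel g y l r k
                  - christoffel g y r i k * christoffel g y l r j)"

definition ricci :: "(real^'k \<Rightarrow> real^'k^'k) \<Rightarrow> real^'k \<Rightarrow> 'k \<Rightarrow> 'k \<Rightarrow> real" where
  "ricci g y i j = (\<Sum>r\<in>UNIV. curvature g y r i j r)"

definition scalar_curv :: "(real^'k \<Rightarrow> real^'k^'k) \<Rightarrow> real^'k \<Rightarrow> real" where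
  "scalar_curv g y = (\<Sum>i\<in>UNIV. \<Sum>j\<in>UNIV. matrix_inv (g y) $ i $ j * ricci g y i j)"

text \<open>Adapted frame index set on E* = J^{1*}(T,M): Inl a ~ dt^a, Inr (Inl i) ~ dx^i,
  Inr (Inr (a,i)) ~ delta p^a_i.\<close>
type_synonym ('m,'n) aidx = "'m + 'n + ('m \<times> 'n)"

text \<open>The adapted metric G = h*_{ab} dt^a dt^b + phi_{ij} dx^i dx^j + h*_{ab} phi^{ij} dp^a_i dp^b_j,
  with h*_{ab} = h_{ab}/(4mc), at the point with coordinates (t,x).\<close>
definition adapted_metric ::
  "real \<Rightarrow> real \<Rightarrow> (real^'m \<Rightarrow> real^'m^'m) \<Rightarrow> (real^'n \<Rightarrow> real^'n^'n) \<Rightarrow> real^'m \<Rightarrow> real^'n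
     \<Rightarrow> real^(('m::finite,'n::finite) aidx)^(('m,'n) aidx)" where
  "adapted_metric mass c h \<phi> t x = (\<chi> A B.
     (case (A, B) of
        (Inl a, Inl b) \<Rightarrow> h t $ a $ b / (4 * mass * c)
      | (Inr (Inl i), Inr (Inl j)) \<Rightarrow> \<phi> x $ i $ j
      | (Inr (Inr (a,i)), Inr (Inr (b,j))) \<Rightarrow> h t $ a $ b / (4 * mass * c) * matrix_inv (\<phi> x) $ i $ j
      | _ \<Rightarrow> 0))"

text \<open>Ricci tensor of the generalized Cartan canonical connection C Gamma(N) in the adapted frame:
  its only effective local Ricci d-tensors are chi_{ab} (Ricci of h) and R_{ij} (Ricci of phi).\<close>
definition cartan_ricci ::
  "(real^'m \<Rightarrow> real^'m^'m) \<Rightarrow> (real^'n \<Rightarrow> real^'n^'n) \<Rightarrow> real^'m \<Rightarrow> real^'n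
     \<Rightarrow> real^(('m::finite,'n::finite) aidx)^(('m,'n) aidx)" where
  "cartan_ricci h \<phi> t x = (\<chi> A B.
     (case (A, B) of
        (Inl a, Inl b) \<Rightarrow> ricci h t a b
      | (Inr (Inl i), Inr (Inl j)) \<Rightarrow> ricci \<phi> x i j
      | _ \<Rightarrow> 0))"

definition cartan_scalar_curv ::
  "real \<Rightarrow> real \<Rightarrow> (real^'m \<Rightarrow> real^'m^'m) \<Rightarrow> (real^'n \<Rightarrow> real^'n^'n) \<Rightarrow> real^'m \<Rightarrow> real^'n
     \<Rightarrow> real" where
  "cartan_scalar_curv mass c h \<phi> t x =
     (\<Sum>A\<in>(UNIV::('m::finite,'n::finite) aidx set). \<Sum>B\<in>UNIV.
        matrix_inv (adapted_metric mass c h \<phi> t x) $ A $ B * cartan_ricci h \<phi> t x $ A $ B)"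

end

theory Submission
  imports Defs
begin

text \<open>In the adapted frame the metric is block diagonal,
  \<open>G = diag(h\<^sup>*, \<phi>, h\<^sup>* \<otimes> \<phi>\<^sup>-\<^sup>1)\<close> with \<open>h\<^sup>* = h/(4mc)\<close>, so its inverse is
  \<open>diag(4mc h\<^sup>-\<^sup>1, \<phi>\<^sup>-\<^sup>1, 4mc h\<^sup>-\<^sup>1 \<otimes> \<phi>)\<close>. The Ricci tensor of \<open>C\<Gamma>(N)\<close> lives only on the
  first two blocks, so the contraction \<open>G\<^sup>A\<^sup>B Ric\<^sub>A\<^sub>B\<close> splits into \<open>4mc \<chi> + \<R>\<close>.\<close>

lemma sum_UNIV_sum:
  fixes f :: "'a::finite + 'b::finite \<Rightarrow> 'c::comm_monoid_add"
  shows "(\<Sum>K\<in>UNIV. f K) = (\<Sum>k\<in>UNIV. f (Inl k)) + (\<Sum>k\<in>UNIV. f (Inr k))"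
  by (simp add: sum.Plus flip: UNIV_Plus_UNIV)

lemma matrix_inv_right:
  fixes A :: "'a::semiring_1^'n^'m"
  assumes "invertible A"
  shows "A ** matrix_inv A = mat 1"
  using someI_ex[OF assms[unfolded invertible_def]] by (simp add: matrix_inv_def)

lemma matrix_inv_left:
  fixes A :: "'a::semiring_1^'n^'m"
  assumes "invertible A"
  shows "matrix_inv A ** A = mat 1"
  using someI_ex[OF assms[unfolded invertible_def]] by (simp add: matrix_inv_def)

lemma matrix_inv_unique:
  fixes A B :: "'a::field^'n^'n"
  assumes "A ** B = mat 1"
  shows "matrix_inv A = B"
proof -
  have "invertible A"
    using assms invertible_right_inverse by blast
  then have "matrix_inv A = matrix_inv A ** (A ** B)"
    by (simp add: assms)
  also have "\<dots> = B"
    using \<open>invertible A\<close> by (simp add: matrix_mul_assoc matrix_inv_left)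
  finally show ?thesis .
qed

lemma invertible_matrix_inv:
  fixes A :: "'a::field^'n^'n"
  assumes "invertible A"
  shows "invertible (matrix_inv A)"
  using assms invertible_def matrix_inv_left matrix_inv_right by blast

lemma matrix_inv_matrix_inv:
  fixes A :: "'a::field^'n^'n"
  assumes "invertible A"
  shows "matrix_inv (matrix_inv A) = A"
  by (rule matrix_inv_unique) (rule matrix_inv_left[OF assms])

lemma matrix_inv_scaleR:
  fixes A :: "'a::{field, real_algebra_1}^'n^'n"
  assumes "k \<noteq> 0" and "invertible A"
  shows "matrix_inv (k *\<^sub>R A) = inverse k *\<^sub>R matrix_inv A"
  by (rule matrix_inv_unique)
     (simp add: assms matrix_scalar_ac matrix_inv_right flip: scalar_matrix_assoc)

lemma positive_definite_imp_invertible: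
  fixes A :: "real^'n^'n"
  assumes "\<And>v. v \<noteq> 0 \<Longrightarrow> v \<bullet> (A *v v) > 0"
  shows "invertible A"
proof -
  have "\<forall>v. A *v v = 0 \<longrightarrow> v = 0"
    using assms by force
  then show ?thesis
    using matrix_left_invertible_ker invertible_left_inverse by blast
qed

definition block_diag :: "'a::zero^'m^'m \<Rightarrow> 'a^'n^'n \<Rightarrow> 'a^('m + 'n)^('m + 'n)" where
  "block_diag A B = (\<chi> I J. case (I, J) of
      (Inl i, Inl j) \<Rightarrow> A $ i $ j
    | (Inr i, Inr j) \<Rightarrow> B $ i $ j
    | _ \<Rightarrow> 0)"

lemma block_diag_nth [simp]:
  "block_diag A B $ Inl i $ Inl j = A $ i $ j"
  "block_diag A B $ Inr k $ Inr l = B $ k $ l"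
  "block_diag A B $ Inl i $ Inr l = 0"
  "block_diag A B $ Inr k $ Inl j = 0"
  by (simp_all add: block_diag_def)

lemma block_diag_mult:
  fixes A C :: "'a::semiring_1^'m::finite^'m" and B D :: "'a^'n::finite^'n"
  shows "block_diag A B ** block_diag C D = block_diag (A ** C) (B ** D)"
  by (simp add: vec_eq_iff split_sum_all matrix_matrix_mult_def sum_UNIV_sum)

lemma block_diag_mat_1:
  "block_diag (mat 1) (mat 1) = (mat 1 :: 'a::zero_neq_one^('m::finite + 'n::finite)^('m + 'n))"
  by (simp add: vec_eq_iff split_sum_all mat_def)

lemma invertible_block_diag:
  fixes A :: "'a::field^'m::finite^'m" and B :: "'a^'n::finite^'n"
  assumes "invertible A" and "invertible B"
  shows "invertible (block_diag A B)"
  unfolding invertible_right_inverse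
  using assms by (metis block_diag_mult block_diag_mat_1 matrix_inv_right)

lemma matrix_inv_block_diag:
  fixes A :: "'a::field^'m::finite^'m" and B :: "'a^'n::finite^'n"
  assumes "invertible A" and "invertible B"
  shows "matrix_inv (block_diag A B) = block_diag (matrix_inv A) (matrix_inv B)"
  by (rule matrix_inv_unique)
     (simp add: block_diag_mult block_diag_mat_1 matrix_inv_right assms)

definition kronecker :: "'a::times^'m^'m \<Rightarrow> 'a^'n^'n \<Rightarrow> 'a^('m \<times> 'n)^('m \<times> 'n)" where
  "kronecker A B = (\<chi> I J. A $ fst I $ fst J * B $ snd I $ snd J)"

lemma kronecker_nth [simp]: "kronecker A B $ (i, k) $ (j, l) = A $ i $ j * B $ k $ l"
  by (simp add: kronecker_def)

lemma kronecker_mult: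
  fixes A C :: "'a::comm_semiring_1^'m::finite^'m" and B D :: "'a^'n::finite^'n"
  shows "kronecker A B ** kronecker C D = kronecker (A ** C) (B ** D)"
  by (simp add: vec_eq_iff kronecker_def matrix_matrix_mult_def sum_product sum.cartesian_product
      case_prod_beta mult_ac flip: UNIV_Times_UNIV)

lemma kronecker_mat_1:
  "kronecker (mat 1) (mat 1) = (mat 1 :: 'a::semiring_1^('m::finite \<times> 'n::finite)^('m \<times> 'n))"
  by (simp add: vec_eq_iff mat_def kronecker_def prod_eq_iff)

lemma invertible_kronecker:
  fixes A :: "'a::field^'m::finite^'m" and B :: "'a^'n::finite^'n"
  assumes "invertible A" and "invertible B"
  shows "invertible (kronecker A B)"
  unfolding invertible_right_inverse
  using assms by (metis kronecker_mult kronecker_mat_1 matrix_inv_right)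

lemma matrix_inv_kronecker:
  fixes A :: "'a::field^'m::finite^'m" and B :: "'a^'n::finite^'n"
  assumes "invertible A" and "invertible B"
  shows "matrix_inv (kronecker A B) = kronecker (matrix_inv A) (matrix_inv B)"
  by (rule matrix_inv_unique)
     (simp add: kronecker_mult kronecker_mat_1 matrix_inv_right assms)

lemma sum_block_diag_products:
  fixes A C :: "'a::comm_semiring_1^'m::finite^'m" and B D :: "'a^'n::finite^'n"
  shows "(\<Sum>I\<in>UNIV. \<Sum>J\<in>UNIV. block_diag A B $ I $ J * block_diag C D $ I $ J)
    = (\<Sum>i\<in>UNIV. \<Sum>j\<in>UNIV. A $ i $ j * C $ i $ j) + (\<Sum>k\<in>UNIV. \<Sum>l\<in>UNIV. B $ k $ l * D $ k $ l)"
  by (simp add: sum_UNIV_sum)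

lemma aidx_cases:
  fixes A :: "('m, 'n) aidx"
  obtains (horizontal) a where "A = Inl a"
    | (base) i where "A = Inr (Inl i)"
    | (vertical) a i where "A = Inr (Inr (a, i))"
  by (metis sumE surj_pair)

lemma adapted_metric_block_diag:
  fixes h :: "real^'m::finite \<Rightarrow> real^'m^'m" and \<phi> :: "real^'n::finite \<Rightarrow> real^'n^'n"
  shows "adapted_metric mass c h \<phi> t x =
     block_diag (h t /\<^sub>R (4 * mass * c))
       (block_diag (\<phi> x) (kronecker (h t /\<^sub>R (4 * mass * c)) (matrix_inv (\<phi> x))))"
    (is "?G = ?D")
  unfolding vec_eq_iff
proof (intro allI)
  fix A B :: "('m, 'n) aidx"
  show "?G $ A $ B = ?D $ A $ B"
    by (cases A rule: aidx_cases; cases B rule: aidx_cases) (simp_all add: adapted_metric_def field_simps)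
qed

lemma cartan_ricci_block_diag:
  fixes h :: "real^'m::finite \<Rightarrow> real^'m^'m" and \<phi> :: "real^'n::finite \<Rightarrow> real^'n^'n"
  shows "cartan_ricci h \<phi> t x = block_diag (\<chi> a b. ricci h t a b) (block_diag (\<chi> i j. ricci \<phi> x i j) 0)"
    (is "?R = ?D")
  unfolding vec_eq_iff
proof (intro allI)
  fix A B :: "('m, 'n) aidx"
  show "?R $ A $ B = ?D $ A $ B"
    by (cases A rule: aidx_cases; cases B rule: aidx_cases) (simp_all add: cartan_ricci_def)
qed

theorem mainTheorem1:
  fixes mass c :: real
    and h :: "real^'m::finite \<Rightarrow> real^'m^'m"
    and \<phi> :: "real^'n::finite \<Rightarrow> real^'n^'n"
    and t :: "real^'m" and x :: "real^'n"
  assumes "mass \<noteq> 0" and "c > 0"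
    and "\<And>s. transpose (h s) = h s"
    and "\<And>s v. v \<noteq> 0 \<Longrightarrow> v \<bullet> (h s *v v) > 0"
    and "\<And>y. transpose (\<phi> y) = \<phi> y"
    and "\<And>y. invertible (\<phi> y)"
  shows "cartan_scalar_curv mass c h \<phi> t x = (4 * mass * c) * scalar_curv h t + scalar_curv \<phi> x"
proof -
  define s where "s = 4 * mass * c"
  have "s \<noteq> 0"
    using assms(1,2) by (simp add: s_def)
  have "invertible (h t)"
    using assms(4) by (rule positive_definite_imp_invertible)
  then have h_inv: "invertible (h t /\<^sub>R s)"
    using \<open>s \<noteq> 0\<close> by (simp add: scalar_invertible)
  have h_inv_eq: "matrix_inv (h t /\<^sub>R s) = s *\<^sub>R matrix_inv (h t)"
    using \<open>s \<noteq> 0\<close> \<open>invertible (h t)\<close> by (simp add: matrix_inv_scaleR)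
  have "matrix_inv (adapted_metric mass c h \<phi> t x) =
      block_diag (s *\<^sub>R matrix_inv (h t))
        (block_diag (matrix_inv (\<phi> x)) (kronecker (s *\<^sub>R matrix_inv (h t)) (\<phi> x)))"
    using h_inv assms(6)
    by (simp add: adapted_metric_block_diag matrix_inv_block_diag matrix_inv_kronecker h_inv_eq
        matrix_inv_matrix_inv invertible_matrix_inv invertible_block_diag invertible_kronecker
        flip: s_def)
  then show ?thesis
    unfolding cartan_scalar_curv_def cartan_ricci_block_diag
    by (simp add: sum_block_diag_products scalar_curv_def sum_distrib_left mult.assoc s_def)
qed

end
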